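(* Let $\lambda$ be a nonzero real number and let $n,r$ be positive integers. Then $$\sum_{k=1}^{n}(-1)^{k}H_{k,\lambda}^{(r)}\,k!\,S_{2,\lambda}(n,k)=(-1)^{n}\langle r\rangle_{n-1,\lambda}\,n.$$ In particular, for $r=1$ (provided $\langle 1\rangle_{n-1,\lambda}\neq 0$), $$\frac{1}{\langle 1\rangle_{n-1,\lambda}}\sum_{k=1}^{n}(-1)^{n-k}H_{k,\lambda}\,k!\,S_{2,\lambda}(n,k)=n.$$
   Context: For real $x$ and integer $k\ge0$: $(x)_{0,\lambda}=1$, $(x)_{k,\lambda}=x(x-\lambda)\cdots(x-(k-1)\lambda)$; $\langle x\rangle_{0,\lambda}=1$, $\langle x\rangle_{k,\lambda}=x(x+\lambda)\cdots(x+(k-1)\lambda)$; $(x)_0=1$, $(x)_k=x(x-1)\cdots(x-k+1)$. The degenerate Stirling numbers of the second kind $S_{2,\lambda}(n,k)$ are defined by $(x)_{n,\lambda}=\sum_{k=0}^{n}S_{2,\lambda}(n,k)(x)_{k}$ for $n\ge0$; equivalently $\frac{1}{k!}(e_\lambda(t)-1)^k=\sum_{n\ge k}S_{2,\lambda}(n,k)\frac{t^n}{n!}$, where $e_\lambda(t)=\sum_{k\ge0}(1)_{k,\lambda}t^k/k!=(1+\lambda t)^{1/\lambda}$. The degenerate harmonic numbers are $H_{0,\lambda}=0$, $H_{n,\lambda}=\sum_{k=1}^{n}\frac{1}{\lambda}\binom{\lambda}{k}(-1)^{k-1}$ for $n\ge1$; the degenerate hyperharmonic numbers are $H_{n,\lambda}^{(1)}=H_{n,\lambda}$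 and $H_{n,\lambda}^{(r)}=\sum_{k=1}^{n}H_{k,\lambda}^{(r-1)}$ for $r\ge2$. *)

theory Defs
  imports Complex_Main
begin

definition deg_fall :: "real \<Rightarrow> real \<Rightarrow> nat \<Rightarrow> real" where
  "deg_fall lam x k = (\<Prod>i<k. x - real i * lam)"

definition deg_rise :: "real \<Rightarrow> real \<Rightarrow> nat \<Rightarrow> real" where
  "deg_rise lam x k = (\<Prod>i<k. x + real i * lam)"

definition fall :: "real \<Rightarrow> nat \<Rightarrow> real" where
  "fall x k = (\<Prod>i<k. x - real i)"

definition deg_stirling2 :: "real \<Rightarrow> nat \<Rightarrow> nat \<Rightarrow> real" where
  "deg_stirling2 lam n = (THE c. (\<forall>k>n. c k = 0) \<and>
      (\<forall>x. deg_fall lam x n = (\<Sum>k\<le>n. c k * fall x k)))"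

definition deg_harm :: "real \<Rightarrow> nat \<Rightarrow> real" where
  "deg_harm lam n = (\<Sum>k=1..n. (1 / lam) * (lam gchoose k) * (-1) ^ (k - 1))"

text \<open>Degenerate hyperharmonic numbers H^{(r)}_{n,lambda} for r \<ge> 1
  (the value for r = 0 is an irrelevant convention).\<close>
fun deg_hyperharm :: "real \<Rightarrow> nat \<Rightarrow> nat \<Rightarrow> real" where
  "deg_hyperharm lam 0 n = 0"
| "deg_hyperharm lam (Suc 0) n = deg_harm lam n"
| "deg_hyperharm lam (Suc (Suc r)) n = (\<Sum>k=1..n. deg_hyperharm lam (Suc r) k)"

end

(* Writing <y>_k for the ordinary rising factorial (pochhammer), the hyperharmonic numbers have
   the closed form k! H^(r)_{k,lam} = (<r>_k - <r - lam>_k) / lam: for r = 1 this is the alternating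
   partial row sum of binomial coefficients, and each summation step in r is the hockey-stick
   identity.  Evaluating (x)_{n,lam} = sum_k S_{2,lam}(n,k) (x)_k at x = -y, where (-y)_k = (-1)^k <y>_k,
   gives sum_k (-1)^k <y>_k S_{2,lam}(n,k) = (-1)^n <y>_{n,lam}.  So the sum in question is
   (-1)^n (<r>_{n,lam} - <r - lam>_{n,lam}) / lam, and the two degenerate rising factorials share
   all factors but one, which leaves n lam <r>_{n-1,lam}. *)
theory Submission
  imports Defs
begin

lemma fall_0: "fall x 0 = 1"
  by (simp add: fall_def)

lemma fall_Suc: "fall x (Suc k) = fall x k * (x - real k)"
  by (simp add: fall_def)

lemma fall_uminus: "fall (- y) k = (-1) ^ k * pochhammer y k"
  by (induction k) (simp_all add: fall_def pochhammer_Suc algebra_simps)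

lemma fall_of_nat_eq_0: "k < j \<Longrightarrow> fall (real k) j = 0"
  using fall_uminus[of "- real k" j] by (simp add: pochhammer_of_nat_eq_0_iff)

lemma fall_of_nat_self: "fall (real k) k = fact k"
  using fall_uminus[of "- real k" k] by (simp add: pochhammer_same)

lemma fall_expansion_unique:
  assumes "\<And>x. (\<Sum>j\<le>n. c j * fall x j) = (\<Sum>j\<le>n. d j * fall x j)" and "k \<le> n"
  shows "c k = d k"
  using assms(2)
proof (induction k rule: less_induct)
  case (less k)
  have split: "(\<Sum>j\<le>n. e j * fall (real k) j) = (\<Sum>j<k. e j * fall (real k) j) + e k * fact k"
    for e :: "nat \<Rightarrow> real"
  proof -
    have "(\<Sum>j\<le>n. e j * fall (real k) j) = (\<Sum>j\<le>k. e j * fall (real k) j)"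
      using less.prems by (intro sum.mono_neutral_right) (auto simp: fall_of_nat_eq_0)
    then show ?thesis
      by (simp add: lessThan_Suc_atMost[symmetric] fall_of_nat_self)
  qed
  have "(\<Sum>j<k. c j * fall (real k) j) = (\<Sum>j<k. d j * fall (real k) j)"
    using less.IH less.prems by (intro sum.cong) auto
  with assms(1)[of "real k"] show "c k = d k"
    unfolding split by simp
qed

(* The usual triangular recurrence; it only serves to show that the coefficients
   described by deg_stirling2 exist. *)
fun deg_stirling2_rec :: "real \<Rightarrow> nat \<Rightarrow> nat \<Rightarrow> real" where
  "deg_stirling2_rec lam 0 k = (if k = 0 then 1 else 0)"
| "deg_stirling2_rec lam (Suc n) 0 = - real n * lam * deg_stirling2_rec lam n 0"
| "deg_stirling2_rec lam (Suc n) (Suc k) =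
     deg_stirling2_rec lam n k + (real (Suc k) - real n * lam) * deg_stirling2_rec lam n (Suc k)"

lemma deg_stirling2_rec_eq_0: "n < k \<Longrightarrow> deg_stirling2_rec lam n k = 0"
proof (induction n arbitrary: k)
  case (Suc n)
  then obtain k' where "k = Suc k'" by (cases k) auto
  with Suc show ?case by simp
qed simp

lemma deg_fall_deg_stirling2_rec:
  "deg_fall lam x n = (\<Sum>k\<le>n. deg_stirling2_rec lam n k * fall x k)"
proof (induction n)
  case 0
  then show ?case by (simp add: deg_fall_def fall_def)
next
  case (Suc n)
  let ?S = "deg_stirling2_rec lam"
  have shifted: "(\<Sum>k\<le>n. (real k - real n * lam) * ?S n k * fall x k)
      = - real n * lam * ?S n 0 + (\<Sum>k\<le>n. (real (Suc k) - real n * lam) * ?S n (Suc k) * fall x (Suc k))"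
  proof -
    have "(\<Sum>k\<le>n. (real k - real n * lam) * ?S n k * fall x k)
        = (\<Sum>k\<le>Suc n. (real k - real n * lam) * ?S n k * fall x k)"
      by (simp add: deg_stirling2_rec_eq_0)
    also have "\<dots> = (real 0 - real n * lam) * ?S n 0 * fall x 0
        + (\<Sum>k\<le>n. (real (Suc k) - real n * lam) * ?S n (Suc k) * fall x (Suc k))"
      by (rule sum.atMost_Suc_shift)
    finally show ?thesis
      by (simp add: fall_0)
  qed
  have "deg_fall lam x (Suc n) = deg_fall lam x n * (x - real n * lam)"
    by (simp add: deg_fall_def)
  also have "\<dots> = (\<Sum>k\<le>n. ?S n k * fall x (Suc k))
                  + (\<Sum>k\<le>n. (real k - real n * lam) * ?S n k * fall x k)"
    unfolding Suc sum_distrib_right sum.distrib[symmetric]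
    by (intro sum.cong) (simp_all add: fall_Suc algebra_simps)
  also have "\<dots> = ?S (Suc n) 0 * fall x 0 + (\<Sum>k\<le>n. ?S (Suc n) (Suc k) * fall x (Suc k))"
    unfolding shifted by (simp add: fall_0 algebra_simps flip: sum.distrib)
  also have "\<dots> = (\<Sum>k\<le>Suc n. ?S (Suc n) k * fall x k)"
    by (rule sum.atMost_Suc_shift[symmetric])
  finally show ?case .
qed

lemma deg_stirling2_eq_rec: "deg_stirling2 lam n = deg_stirling2_rec lam n"
  unfolding deg_stirling2_def
proof (rule the_equality)
  fix c
  assume c: "(\<forall>k>n. c k = 0) \<and> (\<forall>x. deg_fall lam x n = (\<Sum>k\<le>n. c k * fall x k))"
  have "c k = deg_stirling2_rec lam n k" for k
  proof (cases "k \<le> n")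
    case True
    with c show ?thesis
      by (intro fall_expansion_unique[where d = "deg_stirling2_rec lam n"]) (simp_all add: deg_fall_deg_stirling2_rec)
  qed (use c deg_stirling2_rec_eq_0 in auto)
  then show "c = deg_stirling2_rec lam n" ..
qed (simp add: deg_stirling2_rec_eq_0 deg_fall_deg_stirling2_rec)

lemma deg_fall_deg_stirling2: "deg_fall lam x n = (\<Sum>k\<le>n. deg_stirling2 lam n k * fall x k)"
  by (simp add: deg_stirling2_eq_rec deg_fall_deg_stirling2_rec)

lemma deg_fall_uminus: "deg_fall lam (- y) n = (-1) ^ n * deg_rise lam y n"
  by (induction n) (simp_all add: deg_fall_def deg_rise_def algebra_simps)

lemma sum_deg_stirling2_pochhammer:
  "(\<Sum>k\<le>n. (-1) ^ k * pochhammer y k * deg_stirling2 lam n k) = (-1) ^ n * deg_rise lam y n"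
  using deg_fall_deg_stirling2[of lam "- y" n]
  by (simp add: deg_fall_uminus fall_uminus mult_ac)

lemma deg_rise_Suc_diff:
  "deg_rise lam y (Suc m) - deg_rise lam (y - lam) (Suc m) = real (Suc m) * lam * deg_rise lam y m"
proof -
  have "deg_rise lam (y - lam) (Suc m) = (y - lam) * deg_rise lam y m"
    unfolding deg_rise_def prod.lessThan_Suc_shift by (simp add: algebra_simps)
  then show ?thesis
    by (simp add: deg_rise_def algebra_simps)
qed

lemma sum_pochhammer_div_fact: "(\<Sum>k\<le>n. pochhammer a k / fact k) = pochhammer (a + 1) n / fact n"
  for a :: real
  using gbinomial_parallel_sum[of "a - 1" n] by (simp add: gbinomial_pochhammer')

(* No hypothesis on lam: for lam = 0 both sides are 0, as x / 0 = 0. *)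
lemma deg_harm_closed_form: "deg_harm lam n = (1 - pochhammer (1 - lam) n / fact n) / lam"
proof -
  have "deg_harm lam n = - (\<Sum>k=1..n. (lam gchoose k) * (-1) ^ k) / lam"
    unfolding deg_harm_def sum_divide_distrib sum_negf[symmetric]
    by (intro sum.cong) (auto simp: power_eq_if)
  also have "\<dots> = (1 - (\<Sum>k\<le>n. (lam gchoose k) * (-1) ^ k)) / lam"
    by (simp add: atLeast0AtMost[symmetric] sum.atLeast_Suc_atMost)
  finally show ?thesis
    unfolding gbinomial_sum_lower_neg by (simp add: gbinomial_pochhammer)
qed

lemma deg_hyperharm_Suc:
  "1 \<le> r \<Longrightarrow> deg_hyperharm lam (Suc r) n = (\<Sum>k=1..n. deg_hyperharm lam r k)"
  by (cases r) auto

lemma deg_hyperharm_closed_form: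
  assumes "1 \<le> r"
  shows "deg_hyperharm lam r n = (pochhammer (real r) n - pochhammer (real r - lam) n) / (lam * fact n)"
  using assms
proof (induction r arbitrary: n rule: nat_induct_at_least)
  case base
  show ?case
    by (simp add: deg_harm_closed_form pochhammer_fact[symmetric] diff_divide_distrib)
next
  case (Suc r)
  let ?h = "\<lambda>k. (pochhammer (real r) k / fact k - pochhammer (real r - lam) k / fact k) / lam"
  have "deg_hyperharm lam (Suc r) n = (\<Sum>k=1..n. ?h k)"
    using Suc by (simp add: deg_hyperharm_Suc diff_divide_distrib ac_simps)
  also have "\<dots> = (\<Sum>k\<le>n. ?h k)"
    by (simp add: atLeast0AtMost[symmetric] sum.atLeast_Suc_atMost)
  also have "\<dots> = (pochhammer (real r + 1) n / fact n - pochhammer (real r - lam + 1) n / fact n) / lam"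
    by (simp only: sum_divide_distrib[symmetric] sum_subtractf sum_pochhammer_div_fact)
  finally show ?case
    by (simp add: diff_divide_distrib algebra_simps)
qed

lemma sum_deg_hyperharm_deg_stirling2:
  assumes "lam \<noteq> 0" and "1 \<le> n" and "1 \<le> r"
  shows "(\<Sum>k=1..n. (-1) ^ k * deg_hyperharm lam r k * fact k * deg_stirling2 lam n k)
           = (-1) ^ n * deg_rise lam (real r) (n - 1) * real n"
proof -
  obtain m where n: "n = Suc m" using assms(2) by (cases n) auto
  have "(\<Sum>k=1..n. (-1) ^ k * deg_hyperharm lam r k * fact k * deg_stirling2 lam n k)
      = (\<Sum>k\<le>n. (-1) ^ k * deg_hyperharm lam r k * fact k * deg_stirling2 lam n k)"
    using assms(3) by (simp add: atLeast0AtMost[symmetric] sum.atLeast_Suc_atMost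
        deg_hyperharm_closed_form)
  also have "\<dots> = (\<Sum>k\<le>n. ((-1) ^ k * pochhammer (real r) k * deg_stirling2 lam n k
                  - (-1) ^ k * pochhammer (real r - lam) k * deg_stirling2 lam n k) / lam)"
  proof (rule sum.cong[OF refl])
    fix k
    have "(-1) ^ k * deg_hyperharm lam r k * fact k * deg_stirling2 lam n k
        = (-1) ^ k * ((pochhammer (real r) k - pochhammer (real r - lam) k) / lam) * deg_stirling2 lam n k"
      using assms(3) by (simp add: deg_hyperharm_closed_form)
    then show "(-1) ^ k * deg_hyperharm lam r k * fact k * deg_stirling2 lam n k
        = ((-1) ^ k * pochhammer (real r) k * deg_stirling2 lam n k
           - (-1) ^ k * pochhammer (real r - lam) k * deg_stirling2 lam n k) / lam"
      by (simp add: algebra_simps diff_divide_distrib)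
  qed
  also have "\<dots> = (-1) ^ n * (deg_rise lam (real r) n - deg_rise lam (real r - lam) n) / lam"
    by (simp add: sum_divide_distrib[symmetric] sum_subtractf sum_deg_stirling2_pochhammer
        right_diff_distrib)
  also have "\<dots> = (-1) ^ n * deg_rise lam (real r) (n - 1) * real n"
    using assms(1) by (simp add: n deg_rise_Suc_diff)
  finally show ?thesis .
qed

lemma neg_one_power_diff:
  assumes "k \<le> n"
  shows "(-1 :: 'a :: comm_ring_1) ^ (n - k) = (-1) ^ n * (-1) ^ k"
proof -
  obtain d where n: "n = k + d" using le_Suc_ex[OF assms] ..
  have "(-1 :: 'a) ^ n * (-1) ^ k = (-1) ^ d * ((-1) ^ k * (-1) ^ k)"
    unfolding n power_add by (simp only: mult_ac)
  then show ?thesis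
    by (simp add: n)
qed

theorem theorem2:
  fixes lam :: real and n r :: nat
  assumes "lam \<noteq> 0" and "n \<ge> 1" and "r \<ge> 1"
  shows "(\<Sum>k=1..n. (-1) ^ k * deg_hyperharm lam r k * fact k * deg_stirling2 lam n k)
           = (-1) ^ n * deg_rise lam (real r) (n - 1) * real n
     \<and> (deg_rise lam 1 (n - 1) \<noteq> 0 \<longrightarrow>
         (1 / deg_rise lam 1 (n - 1)) *
           (\<Sum>k=1..n. (-1) ^ (n - k) * deg_harm lam k * fact k * deg_stirling2 lam n k)
           = real n)"
proof (intro conjI impI)
  show "(\<Sum>k=1..n. (-1) ^ k * deg_hyperharm lam r k * fact k * deg_stirling2 lam n k)
           = (-1) ^ n * deg_rise lam (real r) (n - 1) * real n"
    using assms by (rule sum_deg_hyperharm_deg_stirling2)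
  assume nonzero: "deg_rise lam 1 (n - 1) \<noteq> 0"
  have "(\<Sum>k=1..n. (-1) ^ (n - k) * deg_harm lam k * fact k * deg_stirling2 lam n k)
      = (-1) ^ n * (\<Sum>k=1..n. (-1) ^ k * deg_hyperharm lam 1 k * fact k * deg_stirling2 lam n k)"
    by (simp add: sum_distrib_left neg_one_power_diff mult_ac)
  also have "\<dots> = deg_rise lam 1 (n - 1) * real n"
    using sum_deg_hyperharm_deg_stirling2[OF assms(1,2) order_refl] by simp
  finally show "(1 / deg_rise lam 1 (n - 1)) *
           (\<Sum>k=1..n. (-1) ^ (n - k) * deg_harm lam k * fact k * deg_stirling2 lam n k)
           = real n"
    using nonzero by simp
qed

end
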